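(* Let $\rho\in\mathcal{L}_{0}$ be positive, $\delta\in(0,\alpha]$ and $k\in\mathbb{N}^{+}$. Then there is a positive integer $M$ such that any $(\rho,\delta)$-lattice $\{w_{j}\}$ on $\mathbb{D}$ can be divided into $M$ subsequences with the property that if $w_{i}$ and $w_{j}$ are two different points in the same subsequence, then $|w_{i}-w_{j}|\geq2^{k}\delta\min(\rho(w_{i}),\rho(w_{j}))$.
   Context: $\mathbb{D}$ is the open unit disc. $C_0$ is the set of continuous $\rho$ on $\mathbb{D}$ with $\rho(z)\to0$ as $|z|\to1$. $\mathcal{L}$ is the set of real $\rho\in C_0$ with $\sup_{z\ne w}|\rho(z)-\rho(w)|/|z-w|<\infty$; $\mathcal{L}_0$ is the set of $\rho\in\mathcal{L}$ such that for every $\varepsilon>0$ there is a compact $E\subset\mathbb{D}$ with $|\rho(z)-\rho(w)|\le\varepsilon|z-w|$ for $z,w\in\mathbb{D}\setminus E$. $D^r(z)=D(z,r\rho(z))$ (Euclidean disc). There are constants $\alpha>0$, $s>0$ depending only on $\rho$ (with $\alpha$ fixed) such that for $0<r\le\alpha$ a $(\rho,r)$-lattice exists, where a $(\rho,r)$-lattice is a sequence $\{w_k\}\subset\mathbb{D}$ with $\mathbb{D}=\bigcup_kD^r(w_k)$, the discs $D^{sr}(w_k)$ pairwise disjoint, and $\{D^{2\alpha}(w_k)\}$ a covering of $\mathbb{D}$ of finite multiplicity. *)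

theory Defs
  imports "HOL-Analysis.Analysis"
begin

definition unit_disc :: "complex set" where
  "unit_disc = ball 0 1"

definition C0 :: "(complex \<Rightarrow> real) set" where
  "C0 = {\<rho>. continuous_on unit_disc \<rho> \<and>
             (\<forall>\<epsilon>>0. \<exists>r<1. \<forall>z\<in>unit_disc. r < norm z \<longrightarrow> \<bar>\<rho> z\<bar> < \<epsilon>)}"

definition Lclass :: "(complex \<Rightarrow> real) set" where
  "Lclass = {\<rho>. \<rho> \<in> C0 \<and>
     (\<exists>C. \<forall>z\<in>unit_disc. \<forall>w\<in>unit_disc. \<bar>\<rho> z - \<rho> w\<bar> \<le> C * norm (z - w))}"

definition L0class :: "(complex \<Rightarrow> real) set" where
  "L0class = {\<rho>. \<rho> \<in> Lclass \<and>
     (\<forall>\<epsilon>>0. \<exists>E. compact E \<and> E \<subseteq> unit_disc \<and>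
        (\<forall>z\<in>unit_disc - E. \<forall>w\<in>unit_disc - E. \<bar>\<rho> z - \<rho> w\<bar> \<le> \<epsilon> * norm (z - w)))}"

definition rdisc :: "(complex \<Rightarrow> real) \<Rightarrow> real \<Rightarrow> complex \<Rightarrow> complex set" where
  "rdisc \<rho> r z = ball z (r * \<rho> z)"

text \<open>A (rho,r)-lattice, relative to the constants alpha and s attached to rho.\<close>
definition is_lattice ::
  "(complex \<Rightarrow> real) \<Rightarrow> real \<Rightarrow> real \<Rightarrow> real \<Rightarrow> (nat \<Rightarrow> complex) \<Rightarrow> bool" where
  "is_lattice \<rho> \<alpha> s r w \<longleftrightarrow>
     (\<forall>k. w k \<in> unit_disc) \<and>
     unit_disc = (\<Union>k. rdisc \<rho> r (w k)) \<and>
     (\<forall>i j. i \<noteq> j \<longrightarrow> rdisc \<rho> (s * r) (w i) \<inter> rdisc \<rho> (s * r) (w j) = {}) \<and>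
     unit_disc \<subseteq> (\<Union>k. rdisc \<rho> (2 * \<alpha>) (w k)) \<and>
     (\<exists>N::nat. \<forall>z\<in>unit_disc. finite {k. z \<in> rdisc \<rho> (2 * \<alpha>) (w k)} \<and>
                              card {k. z \<in> rdisc \<rho> (2 * \<alpha>) (w k)} \<le> N)"

end

theory Submission
  imports Defs
begin

text \<open>Join two lattice points when they are closer than \<open>2^k \<delta>\<close> times the smaller of their
  \<open>\<rho>\<close>-values; the subsequences sought are the colour classes of a proper colouring of this
  graph. Since \<open>\<rho>\<close> is Lipschitz, all neighbours \<open>w\<^sub>j\<close> of \<open>w\<^sub>i\<close> have \<open>\<rho>(w\<^sub>j)\<close> comparable
  to \<open>\<rho>(w\<^sub>i)\<close>; as the discs \<open>D\<^sup>s\<^sup>\<delta>(w\<^sub>j)\<close> are disjoint, the neighbours are then separated at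
  scale \<open>\<rho>(w\<^sub>i)\<close> inside a disc of radius comparable to \<open>\<rho>(w\<^sub>i)\<close>, so a grid argument bounds
  their number by a constant \<open>D\<close> independent of \<open>i\<close> and of the lattice. A greedy colouring
  along the enumeration then needs only \<open>D + 1\<close> colours. Only the Lipschitz bound of \<open>\<rho>\<close> and
  the disjointness of the discs \<open>D\<^sup>s\<^sup>\<delta>(w\<^sub>j)\<close> are used.\<close>

definition greedy_colouring :: "(nat \<Rightarrow> nat \<Rightarrow> bool) \<Rightarrow> nat \<Rightarrow> nat" where
  "greedy_colouring E = wfrec less_than (\<lambda>c j. LEAST m. \<forall>i<j. E i j \<longrightarrow> c i \<noteq> m)"

lemma greedy_colouring_eq:
  "greedy_colouring E j = (LEAST m. \<forall>i<j. E i j \<longrightarrow> greedy_colouring E i \<noteq> m)"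
  unfolding greedy_colouring_def by (subst wfrec[OF wf_less_than]) (simp add: cut_apply)

lemma greedy_colouring_bounded_proper:
  assumes fin: "finite {i. i < j \<and> E i j}" and deg: "card {i. i < j \<and> E i j} \<le> D"
  shows "greedy_colouring E j \<le> D"
    and "\<And>i. i < j \<Longrightarrow> E i j \<Longrightarrow> greedy_colouring E i \<noteq> greedy_colouring E j"
proof -
  let ?P = "\<lambda>m. \<forall>i<j. E i j \<longrightarrow> greedy_colouring E i \<noteq> m"
  let ?used = "greedy_colouring E ` {i. i < j \<and> E i j}"
  have "card ?used < card {0..D}"
    using card_image_le[OF fin, of "greedy_colouring E"] deg by simp
  then have "\<not> {0..D} \<subseteq> ?used"
    using card_mono[of ?used "{0..D}"] fin by fastforce
  then obtain m where m: "m \<in> {0..D}" "m \<notin> ?used"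
    by blast
  then have "?P m" by auto
  show "greedy_colouring E j \<le> D"
    unfolding greedy_colouring_eq[of E j] using Least_le[of ?P, OF \<open>?P m\<close>] m(1) by simp
  show "greedy_colouring E i \<noteq> greedy_colouring E j" if "i < j" "E i j" for i
    unfolding greedy_colouring_eq[of E j] using LeastI[of ?P, OF \<open>?P m\<close>] that by blast
qed

lemma bounded_degree_colouring:
  fixes E :: "nat \<Rightarrow> nat \<Rightarrow> bool"
  assumes sym: "\<And>i j. E i j \<Longrightarrow> E j i"
    and fin: "\<And>j. finite {i. i \<noteq> j \<and> E i j}"
    and deg: "\<And>j. card {i. i \<noteq> j \<and> E i j} \<le> D"
  shows "\<exists>c. (\<forall>j. c j \<le> D) \<and> (\<forall>i j. i \<noteq> j \<longrightarrow> E i j \<longrightarrow> c i \<noteq> c j)"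
proof (intro exI conjI allI impI)
  have earlier: "finite {i. i < j \<and> E i j} \<and> card {i. i < j \<and> E i j} \<le> D" for j
  proof -
    have "{i. i < j \<and> E i j} \<subseteq> {i. i \<noteq> j \<and> E i j}" by auto
    then show ?thesis using fin deg by (meson card_mono finite_subset le_trans)
  qed
  show "greedy_colouring E j \<le> D" for j
    using earlier greedy_colouring_bounded_proper(1) by blast
  show "greedy_colouring E i \<noteq> greedy_colouring E j" if "i \<noteq> j" "E i j" for i j
  proof (cases "i < j")
    case True
    then show ?thesis
      using greedy_colouring_bounded_proper(2)[of j E D i] earlier[of j] \<open>E i j\<close> by blast
  next
    case False
    then have "j < i" using \<open>i \<noteq> j\<close> by simp
    then show ?thesis
      using greedy_colouring_bounded_proper(2)[of i E D j] earlier[of i] sym[OF \<open>E i j\<close>] by auto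
  qed
qed

lemma floor_mem_symmetric_interval:
  fixes t A :: real
  assumes "\<bar>t\<bar> < A"
  shows "\<lfloor>t\<rfloor> \<in> {-\<lceil>A\<rceil>..\<lceil>A\<rceil>}"
  using assms floor_le_ceiling[of A] floor_mono[of "-A" t] ceiling_def[of A] floor_mono[of t A]
  by (simp, linarith)

lemma floor_eq_imp_abs_diff_less_1:
  fixes a b :: real
  assumes "\<lfloor>a\<rfloor> = \<lfloor>b\<rfloor>"
  shows "\<bar>a - b\<bar> < 1"
  using assms floor_eq_iff[of a "\<lfloor>b\<rfloor>"] floor_eq_iff[of b "\<lfloor>b\<rfloor>"] by linarith

text \<open>Each square cell of side \<open>h\<close> contains at most one of the points, which are \<open>2h\<close>-separated.\<close>
lemma card_separated_points_le:
  fixes p :: "'a \<Rightarrow> complex" and S :: "'a set" and z :: complex and h A :: real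
  assumes h: "h > 0"
    and near: "\<And>j. j \<in> S \<Longrightarrow> norm (p j - z) < A * h"
    and sep: "\<And>j j'. j \<in> S \<Longrightarrow> j' \<in> S \<Longrightarrow> j \<noteq> j' \<Longrightarrow> 2 * h \<le> norm (p j - p j')"
  shows "finite S \<and> card S \<le> nat (2 * \<lceil>A\<rceil> + 1) ^ 2"
proof -
  define cell where "cell j = (\<lfloor>Re (p j - z) / h\<rfloor>, \<lfloor>Im (p j - z) / h\<rfloor>)" for j
  define box where "box = {-\<lceil>A\<rceil>..\<lceil>A\<rceil>} \<times> {-\<lceil>A\<rceil>..\<lceil>A\<rceil>}"
  have "cell ` S \<subseteq> box"
  proof (rule image_subsetI)
    fix j assume "j \<in> S"
    have "\<bar>Re (p j - z)\<bar> < A * h" "\<bar>Im (p j - z)\<bar> < A * h"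
      using near[OF \<open>j \<in> S\<close>] abs_Re_le_cmod abs_Im_le_cmod by (metis le_less_trans)+
    then have bounds: "\<bar>Re (p j - z) / h\<bar> < A" "\<bar>Im (p j - z) / h\<bar> < A"
      using h by (simp_all add: pos_divide_less_eq)
    show "cell j \<in> box"
      unfolding cell_def box_def
      using floor_mem_symmetric_interval[OF bounds(1)] floor_mem_symmetric_interval[OF bounds(2)]
      by simp
  qed
  moreover have "inj_on cell S"
  proof (rule inj_onI, rule ccontr)
    fix j j' assume j: "j \<in> S" "j' \<in> S" "cell j = cell j'" "j \<noteq> j'"
    have "\<bar>Re (p j - z) / h - Re (p j' - z) / h\<bar> < 1" "\<bar>Im (p j - z) / h - Im (p j' - z) / h\<bar> < 1"
      using j(3) unfolding cell_def by (simp_all add: floor_eq_imp_abs_diff_less_1)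
    then have "\<bar>Re (p j - p j')\<bar> < h" "\<bar>Im (p j - p j')\<bar> < h"
      using h by (simp_all add: diff_divide_distrib[symmetric] divide_less_eq)
    then have "norm (p j - p j') < 2 * h" using cmod_le[of "p j - p j'"] by linarith
    then show False using sep[OF j(1,2,4)] by linarith
  qed
  moreover have "finite box" "card box = nat (2 * \<lceil>A\<rceil> + 1) ^ 2"
    unfolding box_def by (simp_all add: card_cartesian_product power2_eq_square)
  ultimately show ?thesis
    using card_inj_on_le inj_on_finite by metis
qed

lemma card_close_neighbours_le:
  fixes \<rho> :: "complex \<Rightarrow> real" and w :: "'a \<Rightarrow> complex" and i :: 'a and L r R :: real
  assumes L: "L \<ge> 0" and lip: "\<And>a b. \<bar>\<rho> (w a) - \<rho> (w b)\<bar> \<le> L * norm (w a - w b)"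
    and pos: "\<And>a. \<rho> (w a) > 0" and r: "r > 0" and R: "R > 0"
    and sep: "\<And>a b. a \<noteq> b \<Longrightarrow> r * \<rho> (w b) \<le> norm (w a - w b)"
  defines "N \<equiv> {j. j \<noteq> i \<and> norm (w i - w j) < R * min (\<rho> (w i)) (\<rho> (w j))}"
  shows "finite N \<and> card N \<le> nat (2 * \<lceil>2 * R * (1 + L * R) / r\<rceil> + 1) ^ 2"
proof -
  define q where "q = 1 + L * R"
  define h where "h = r * \<rho> (w i) / (2 * q)"
  have q: "q > 0" unfolding q_def using L R by (simp add: add_pos_nonneg)
  have h: "h > 0" unfolding h_def using r pos[of i] q by simp
  have close: "norm (w i - w j) < R * \<rho> (w i) \<and> norm (w i - w j) < R * \<rho> (w j)"
    if "j \<in> N" for j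
  proof -
    have "norm (w i - w j) < R * min (\<rho> (w i)) (\<rho> (w j))" using that unfolding N_def by simp
    moreover have "R * min (\<rho> (w i)) (\<rho> (w j)) \<le> R * \<rho> (w i)"
      "R * min (\<rho> (w i)) (\<rho> (w j)) \<le> R * \<rho> (w j)"
      using R by (simp_all add: mult_left_mono)
    ultimately show ?thesis by linarith
  qed
  have comparable: "\<rho> (w i) \<le> q * \<rho> (w j)" if "j \<in> N" for j
  proof -
    have "\<rho> (w i) - \<rho> (w j) \<le> L * norm (w i - w j)" using lip[of i j] by linarith
    also have "\<dots> \<le> L * (R * \<rho> (w j))" using close[OF that] L by (simp add: mult_left_mono)
    finally show ?thesis unfolding q_def by (simp add: algebra_simps)
  qed
  show ?thesis
  proof (rule card_separated_points_le[of h N w "w i"])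
    show "norm (w j - w i) < 2 * R * (1 + L * R) / r * h" if "j \<in> N" for j
    proof -
      have "norm (w j - w i) < R * \<rho> (w i)"
        using close[OF that] by (simp add: norm_minus_commute)
      also have "R * \<rho> (w i) = 2 * R * q / r * h"
        unfolding h_def using r q by (simp add: field_simps)
      finally show ?thesis unfolding q_def .
    qed
    show "2 * h \<le> norm (w j - w j')" if "j \<in> N" "j' \<in> N" "j \<noteq> j'" for j j'
    proof -
      have "2 * h = r * \<rho> (w i) / q" unfolding h_def using q by simp
      also have "\<dots> \<le> r * \<rho> (w j')"
        using comparable[OF that(2)] q r by (simp add: divide_le_eq mult.commute mult.left_commute)
      also have "\<dots> \<le> norm (w j - w j')" using sep[OF that(3)] .
      finally show ?thesis .
    qed
  qed (rule h)
qed

lemma lattice_separated: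
  assumes lat: "is_lattice \<rho> \<alpha> s r w" and pos: "\<forall>z\<in>unit_disc. \<rho> z > 0"
    and "s > 0" "r > 0" "a \<noteq> b"
  shows "s * r * \<rho> (w b) \<le> norm (w a - w b)"
proof (rule ccontr)
  assume "\<not> ?thesis"
  then have "w a \<in> rdisc \<rho> (s * r) (w b)"
    unfolding rdisc_def by (simp add: dist_norm norm_minus_commute)
  moreover have "w a \<in> rdisc \<rho> (s * r) (w a)"
    using lat pos \<open>s > 0\<close> \<open>r > 0\<close> unfolding is_lattice_def rdisc_def by simp
  ultimately show False
    using lat \<open>a \<noteq> b\<close> unfolding is_lattice_def by blast
qed

lemma Lclass_nonneg_lipschitz:
  assumes "\<rho> \<in> Lclass"
  obtains L where "L \<ge> 0" "\<And>z w. z \<in> unit_disc \<Longrightarrow> w \<in> unit_disc \<Longrightarrow> \<bar>\<rho> z - \<rho> w\<bar> \<le> L * norm (z - w)"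
proof -
  obtain C where C: "\<forall>z\<in>unit_disc. \<forall>w\<in>unit_disc. \<bar>\<rho> z - \<rho> w\<bar> \<le> C * norm (z - w)"
    using assms unfolding Lclass_def by blast
  show thesis
  proof (rule that[of "max C 0"])
    show "\<bar>\<rho> z - \<rho> w\<bar> \<le> max C 0 * norm (z - w)" if "z \<in> unit_disc" "w \<in> unit_disc" for z w
      using C that by (meson max.cobounded1 mult_right_mono norm_ge_zero order_trans)
  qed simp
qed

theorem lemma5p6:
  fixes \<rho> :: "complex \<Rightarrow> real" and \<alpha> s \<delta> :: real and k :: nat
  assumes "\<rho> \<in> L0class"
    and "\<forall>z\<in>unit_disc. \<rho> z > 0"
    and "\<alpha> > 0" and "s > 0"
    and "0 < \<delta>" and "\<delta> \<le> \<alpha>"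
    and "k \<ge> 1"
  shows "\<exists>M::nat. M > 0 \<and>
           (\<forall>w. is_lattice \<rho> \<alpha> s \<delta> w \<longrightarrow>
              (\<exists>c::nat \<Rightarrow> nat. (\<forall>j. c j < M) \<and>
                 (\<forall>i j. i \<noteq> j \<and> c i = c j \<longrightarrow>
                    norm (w i - w j) \<ge> 2 ^ k * \<delta> * min (\<rho> (w i)) (\<rho> (w j)))))"
proof -
  obtain L where L: "L \<ge> 0"
    and lip: "\<And>z w. z \<in> unit_disc \<Longrightarrow> w \<in> unit_disc \<Longrightarrow> \<bar>\<rho> z - \<rho> w\<bar> \<le> L * norm (z - w)"
    using Lclass_nonneg_lipschitz assms(1) unfolding L0class_def by blast
  define R where "R = 2 ^ k * \<delta>"
  define D where "D = nat (2 * \<lceil>2 * R * (1 + L * R) / (s * \<delta>)\<rceil> + 1) ^ 2"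
  have "\<exists>c::nat \<Rightarrow> nat. (\<forall>j. c j < Suc D) \<and>
          (\<forall>i j. i \<noteq> j \<and> c i = c j \<longrightarrow> norm (w i - w j) \<ge> R * min (\<rho> (w i)) (\<rho> (w j)))"
    if lat: "is_lattice \<rho> \<alpha> s \<delta> w" for w
  proof -
    have "w a \<in> unit_disc" for a using lat unfolding is_lattice_def by blast
    then have "finite {i. i \<noteq> j \<and> norm (w j - w i) < R * min (\<rho> (w j)) (\<rho> (w i))} \<and>
               card {i. i \<noteq> j \<and> norm (w j - w i) < R * min (\<rho> (w j)) (\<rho> (w i))} \<le> D" for j
      unfolding D_def using assms lattice_separated[OF lat]
      by (intro card_close_neighbours_le L lip) (simp_all add: R_def)
    then obtain c where "\<forall>j. c j \<le> D"
        "\<forall>i j. i \<noteq> j \<longrightarrow> norm (w i - w j) < R * min (\<rho> (w i)) (\<rho> (w j)) \<longrightarrow> c i \<noteq> c j"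
      using bounded_degree_colouring[of "\<lambda>i j. norm (w i - w j) < R * min (\<rho> (w i)) (\<rho> (w j))" D]
      by (auto simp: norm_minus_commute min.commute)
    then show ?thesis by (metis less_Suc_eq_le not_le)
  qed
  then show ?thesis unfolding R_def by blast
qed

end
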